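(* Let $(Z_0,\dots,Z_H)$ be a process on an abstract state space $\mathcal{Z}$ whose transitions $Z_{j+1}\mid Z_j\sim K_j(\cdot\mid Z_j)$, $j=0,\dots,H-1$, satisfy $\eta_{\chi^2}(K_j)\le\eta<1$ for all $j$. Let $\mathcal{T}=\{t_1<\dots<t_m\}\subseteq\{1,\dots,H-1\}$ be an inspection schedule with maximal gap $L(\mathcal{T})$, and for each $u\in\mathcal{T}\cup\{H\}$ let $Y_u=g_u(Z_u)$ be the inspection output. Let $\Delta^2\in(0,\infty)$ and $\epsilon\in(0,1/2)$. Then there exists a step $t^\star\in\{0,\dots,H-1\}$ whose next inspection time $u^\star=\min\{u\in\mathcal{T}\cup\{H\}:u>t^\star\}$ satisfies the following: for any two hypotheses $H_0,H_1$ under which $Z_{t^\star}$ has distributions $P^{(0)}\ll P^{(1)}$ with $\chi^2(P^{(0)}\|P^{(1)})=\Delta^2$ and the kernels $K_j$, $j\ge t^\star$, and the map $g_{u^\star}$ are common to both hypotheses, any test based on $n$ i.i.d. samples of $Y_{u^\star}$ with total testing error at most $\epsilon$ requires $$n\ge\frac{(1-\epsilon)^2}{\eta^{L(\mathcal{T})}\Delta^2}.$$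
   Context: An inspection schedule is a strictly increasing set $\mathcal{T}=\{t_1<\dots<t_m\}\subseteq\{1,\dots,H-1\}$; set $t_0=0$, $t_{m+1}=H$. The downstream distance of step $t$ is $d_{\mathcal{T}}(t)=\min\{u-t:u\in\mathcal{T}\cup\{H\},u>t\}$, and the maximal gap is $L(\mathcal{T})=\max_{t\in\{0,\dots,H-1\}}d_{\mathcal{T}}(t)=\max_{i=0,\dots,m}(t_{i+1}-t_i)$. $\chi^2(P\|Q)=\int(dP/dQ-1)^2dQ$; $\eta_{\chi^2}(K)=\sup\{\chi^2(PK\|QK)/\chi^2(P\|Q):P\ll Q,\ 0<\chi^2(P\|Q)<\infty\}$ with $PK$ the pushforward. The total testing error of a test $\psi$ is $\mathbb{P}_{H_0}(\psi=1)+\mathbb{P}_{H_1}(\psi=0)$. *)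

theory Defs
  imports "HOL-Probability.Probability"
begin

definition chi2 :: "'a measure \<Rightarrow> 'a measure \<Rightarrow> ennreal" where
  "chi2 P Q = (\<integral>\<^sup>+ x. ennreal ((enn2real (RN_deriv Q P x) - 1)\<^sup>2) \<partial>Q)"

definition eta_chi2 :: "'a measure \<Rightarrow> ('a \<Rightarrow> 'a measure) \<Rightarrow> ennreal" where
  "eta_chi2 M K = (SUP PQ \<in> {(P, Q). P \<in> space (prob_algebra M) \<and> Q \<in> space (prob_algebra M)
        \<and> absolutely_continuous Q P \<and> 0 < chi2 P Q \<and> chi2 P Q < \<top>}.
      chi2 (fst PQ \<bind> K) (snd PQ \<bind> K) / chi2 (fst PQ) (snd PQ))"

definition next_insp :: "nat set \<Rightarrow> nat \<Rightarrow> nat \<Rightarrow> nat" where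
  "next_insp T H t = Min {u. u \<in> T \<union> {H} \<and> u > t}"

definition down_dist :: "nat set \<Rightarrow> nat \<Rightarrow> nat \<Rightarrow> nat" where
  "down_dist T H t = Min {u - t | u. u \<in> T \<union> {H} \<and> u > t}"

definition max_gap :: "nat set \<Rightarrow> nat \<Rightarrow> nat" where
  "max_gap T H = Max (down_dist T H ` {0..<H})"

text \<open>Law of Z_(t+k) when Z_t has law P and Z_(j+1) | Z_j ~ K j.\<close>
fun prop_law :: "(nat \<Rightarrow> 'a \<Rightarrow> 'a measure) \<Rightarrow> 'a measure \<Rightarrow> nat \<Rightarrow> nat \<Rightarrow> 'a measure" where
  "prop_law K P t 0 = P"
| "prop_law K P t (Suc k) = prop_law K P t k \<bind> K (t + k)"

text \<open>Total testing error of a test psi (True = reject H0) from n i.i.d. samples,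
  sample law Q0 under H0 and Q1 under H1.\<close>
definition total_error :: "nat \<Rightarrow> 'b measure \<Rightarrow> 'b measure \<Rightarrow> ((nat \<Rightarrow> 'b) \<Rightarrow> bool) \<Rightarrow> real" where
  "total_error n Q0 Q1 psi =
     measure (PiM {..<n} (\<lambda>_. Q0)) {x \<in> space (PiM {..<n} (\<lambda>_. Q0)). psi x}
   + measure (PiM {..<n} (\<lambda>_. Q1)) {x \<in> space (PiM {..<n} (\<lambda>_. Q1)). \<not> psi x}"

end

theory Submission
  imports Defs
begin

text \<open>
  Take the step t whose distance to the next inspection u is the maximal gap L. Each of the
  L kernels between t and u contracts the chi-square divergence of the two laws by the factor
  \<eta>, so at time u it is at most \<eta>^L \<Delta>^2. A test from n samples of g u (Z u) is a test
  between the n-fold products of the two laws of Z u, so 1 minus its total error is at most the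
  total variation D between these products. Le Cam's inequality D^2 \<le> 1 - \<rho>^(2n) for the
  Hellinger affinity \<rho> (the integral of the square root of the density), Bernoulli's
  inequality 1 - \<rho>^(2n) \<le> 2n (1 - \<rho>) and the bound 2 (1 - \<rho>) \<le> \<chi>^2 then give
  (1 - \<epsilon>)^2 \<le> n \<eta>^L \<Delta>^2.
\<close>

subsection \<open>Contraction of the chi-square divergence along the chain\<close>

lemma density_enn2real_RN_deriv:
  assumes P: "P \<in> space (prob_algebra M)" and Q: "Q \<in> space (prob_algebra M)"
    and ac: "absolutely_continuous Q P"
  shows "P = density Q (\<lambda>x. enn2real (RN_deriv Q P x))"
proof -
  interpret Q: prob_space Q using Q by (simp add: space_prob_algebra)
  interpret P: prob_space P using P by (simp add: space_prob_algebra)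
  have sets: "sets P = sets Q" using P Q by (simp add: space_prob_algebra)
  have "P = density Q (RN_deriv Q P)"
    using Q.density_RN_deriv[OF ac sets] by simp
  also have "\<dots> = density Q (\<lambda>x. enn2real (RN_deriv Q P x))"
    using Q.RN_deriv_finite[OF _ ac sets] P.sigma_finite_measure_axioms
    by (intro density_cong) (auto simp: less_top ennreal_enn2real_if)
  finally show ?thesis .
qed

lemma chi2_self:
  assumes "Q \<in> space (prob_algebra M)"
  shows "chi2 Q Q = 0"
proof -
  interpret Q: prob_space Q using assms by (simp add: space_prob_algebra)
  have "AE x in Q. 1 = RN_deriv Q Q x"
    by (rule Q.RN_deriv_unique) (auto simp: density_1)
  then show ?thesis
    unfolding chi2_def by (subst nn_integral_0_iff_AE) (auto elim!: AE_mp)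
qed

lemma chi2_eq_0_imp_eq:
  assumes P: "P \<in> space (prob_algebra M)" and Q: "Q \<in> space (prob_algebra M)"
    and ac: "absolutely_continuous Q P" and "chi2 P Q = 0"
  shows "P = Q"
proof -
  interpret Q: prob_space Q using Q by (simp add: space_prob_algebra)
  have "AE x in Q. ennreal ((enn2real (RN_deriv Q P x) - 1)\<^sup>2) = 0"
    using \<open>chi2 P Q = 0\<close> unfolding chi2_def by (subst (asm) nn_integral_0_iff_AE) auto
  then have "density Q (\<lambda>x. enn2real (RN_deriv Q P x)) = density Q (\<lambda>_. 1)"
    by (intro density_cong) (auto elim!: AE_mp)
  then show ?thesis
    using density_enn2real_RN_deriv[OF P Q ac] by (simp add: density_1)
qed

lemma bind_in_space_prob_algebra:
  assumes "P \<in> space (prob_algebra M)" and "K \<in> M \<rightarrow>\<^sub>M prob_algebra M"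
  shows "P \<bind> K \<in> space (prob_algebra M)"
  using prob_space_bind'[OF assms] sets_bind'[OF assms] by (simp add: space_prob_algebra)

lemma absolutely_continuous_bind:
  assumes P: "P \<in> space (prob_algebra M)" and Q: "Q \<in> space (prob_algebra M)"
    and K: "K \<in> M \<rightarrow>\<^sub>M prob_algebra M" and ac: "absolutely_continuous Q P"
  shows "absolutely_continuous (Q \<bind> K) (P \<bind> K)"
  unfolding absolutely_continuous_def
proof
  fix A assume "A \<in> null_sets (Q \<bind> K)"
  then have A: "A \<in> sets M" "emeasure (Q \<bind> K) A = 0"
    using sets_bind'[OF Q K] by auto
  have "sets Q = sets M" "sets P = sets M"
    using P Q by (auto simp: space_prob_algebra)
  moreover have "(\<lambda>x. emeasure (K x) A) \<in> borel_measurable M"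
    using measurable_prob_algebraD[OF K] A(1) by measurable
  ultimately have meas: "(\<lambda>x. emeasure (K x) A) \<in> borel_measurable Q"
    "(\<lambda>x. emeasure (K x) A) \<in> borel_measurable P"
    by (simp_all cong: measurable_cong_sets)
  have "AE x in Q. emeasure (K x) A = 0"
    using A emeasure_bind_prob_algebra[OF Q K A(1)] meas(1) by (simp add: nn_integral_0_iff_AE)
  then have "AE x in P. emeasure (K x) A = 0"
    using P Q ac by (intro absolutely_continuous_AE[of P Q]) (auto simp: space_prob_algebra)
  then have "(\<integral>\<^sup>+x. emeasure (K x) A \<partial>P) = 0"
    using meas(2) by (simp add: nn_integral_0_iff_AE)
  then show "A \<in> null_sets (P \<bind> K)"
    using A emeasure_bind_prob_algebra[OF P K A(1)] sets_bind'[OF P K] by auto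
qed

lemma chi2_bind_le:
  assumes P: "P \<in> space (prob_algebra M)" and Q: "Q \<in> space (prob_algebra M)"
    and K: "K \<in> M \<rightarrow>\<^sub>M prob_algebra M"
    and ac: "absolutely_continuous Q P" and fin: "chi2 P Q < \<top>"
  shows "chi2 (P \<bind> K) (Q \<bind> K) \<le> eta_chi2 M K * chi2 P Q"
proof (cases "chi2 P Q = 0")
  case True
  then show ?thesis
    using chi2_eq_0_imp_eq[OF P Q ac] chi2_self[OF bind_in_space_prob_algebra[OF Q K]] by simp
next
  case False
  have "chi2 (P \<bind> K) (Q \<bind> K) / chi2 P Q \<le> eta_chi2 M K"
    unfolding eta_chi2_def
    by (rule SUP_upper2[of "(P, Q)"]) (use P Q ac False fin in \<open>auto simp: zero_less_iff_neq_zero\<close>)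
  then have "chi2 (P \<bind> K) (Q \<bind> K) / chi2 P Q * chi2 P Q \<le> eta_chi2 M K * chi2 P Q"
    by (rule mult_right_mono) simp
  then show ?thesis
    using False fin by (simp add: ennreal_divide_times)
qed

lemma prop_law_in_space_prob_algebra:
  assumes kernels: "\<And>j. t \<le> j \<Longrightarrow> j < t + k \<Longrightarrow> K j \<in> M \<rightarrow>\<^sub>M prob_algebra M"
    and P: "P \<in> space (prob_algebra M)"
  shows "prop_law K P t k \<in> space (prob_algebra M)"
  using kernels by (induction k) (auto intro: bind_in_space_prob_algebra P)

lemma chi2_prop_law_le:
  assumes kernels: "\<And>j. t \<le> j \<Longrightarrow> j < t + k \<Longrightarrow> K j \<in> M \<rightarrow>\<^sub>M prob_algebra M"
    and contr: "\<And>j. t \<le> j \<Longrightarrow> j < t + k \<Longrightarrow> eta_chi2 M (K j) \<le> ennreal \<eta>" and "0 \<le> \<eta>"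
    and P: "P \<in> space (prob_algebra M)" and Q: "Q \<in> space (prob_algebra M)"
    and ac: "absolutely_continuous Q P" and fin: "chi2 P Q < \<top>"
  shows "absolutely_continuous (prop_law K Q t k) (prop_law K P t k)
    \<and> chi2 (prop_law K P t k) (prop_law K Q t k) \<le> ennreal (\<eta> ^ k) * chi2 P Q"
  using kernels contr
proof (induction k)
  case 0
  then show ?case using ac by simp
next
  case (Suc k)
  let ?P = "prop_law K P t k" and ?Q = "prop_law K Q t k"
  have IH: "absolutely_continuous ?Q ?P" "chi2 ?P ?Q \<le> ennreal (\<eta> ^ k) * chi2 P Q"
    using Suc by auto
  have Pk: "?P \<in> space (prob_algebra M)" and Qk: "?Q \<in> space (prob_algebra M)"
    using Suc.prems(1) P Q by (auto intro!: prop_law_in_space_prob_algebra)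
  have Kk: "K (t + k) \<in> M \<rightarrow>\<^sub>M prob_algebra M" "eta_chi2 M (K (t + k)) \<le> ennreal \<eta>"
    using Suc.prems by auto
  have "chi2 ?P ?Q < \<top>"
    using IH(2) fin by (auto intro: le_less_trans simp: ennreal_mult_less_top)
  then have "chi2 (?P \<bind> K (t + k)) (?Q \<bind> K (t + k)) \<le> eta_chi2 M (K (t + k)) * chi2 ?P ?Q"
    by (rule chi2_bind_le[OF Pk Qk Kk(1) IH(1)])
  also have "\<dots> \<le> ennreal \<eta> * (ennreal (\<eta> ^ k) * chi2 P Q)"
    using Kk(2) IH(2) by (intro mult_mono) auto
  finally show ?case
    using absolutely_continuous_bind[OF Pk Qk Kk(1) IH(1)] \<open>0 \<le> \<eta>\<close> by (simp add: ennreal_mult' mult.assoc)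
qed

subsection \<open>Hellinger affinity and Le Cam's inequality\<close>

lemma real_sqrt_prod: "sqrt (\<Prod>i\<in>I. f i) = (\<Prod>i\<in>I. sqrt (f i :: real))"
  by (induction I rule: infinite_finite_induct) (auto simp: real_sqrt_mult)

lemma mult_one_minus_le_sqrt_bound:
  fixes y t s :: real
  assumes y: "0 \<le> y" and t: "0 < t" and s: "\<bar>s\<bar> \<le> 1"
  shows "s * (1 - y) \<le> (t + 1 / t) / 2 * (1 + y) + (1 / t - t) * sqrt y"
proof -
  define r where "r = sqrt y"
  have r: "0 \<le> r" and y_eq: "y = r\<^sup>2" using y by (auto simp: r_def)
  have "s * (1 - y) \<le> \<bar>s\<bar> * \<bar>1 - y\<bar>"
    by (metis abs_ge_self abs_mult)
  also have "\<dots> \<le> \<bar>1 - y\<bar>"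
    using s by (simp add: mult_left_le_one_le)
  also have "1 - y = (1 - r) * (1 + r)"
    using y_eq by (simp add: power2_eq_square algebra_simps)
  then have "\<bar>1 - y\<bar> = \<bar>1 - r\<bar> * (1 + r)"
    using r by (simp add: abs_mult)
  also have "\<bar>1 - r\<bar> * (1 + r) \<le> (t * (1 - r)\<^sup>2 + (1 + r)\<^sup>2 / t) / 2"
  proof -
    \<comment> \<open>AM-GM in the form \<open>2ab \<le> t a\<^sup>2 + b\<^sup>2 / t\<close>\<close>
    have "0 \<le> (t * \<bar>1 - r\<bar> - (1 + r))\<^sup>2 / t" using t by simp
    also have "\<dots> = t * (1 - r)\<^sup>2 + (1 + r)\<^sup>2 / t - 2 * (\<bar>1 - r\<bar> * (1 + r))"
      using t by (simp add: power2_eq_square field_simps)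
    finally show ?thesis by simp
  qed
  also have "\<dots> = (t + 1 / t) / 2 * (1 + r\<^sup>2) + (1 / t - t) * r"
    using t by (simp add: power2_diff power2_sum field_simps)
  finally show ?thesis
    unfolding r_def[symmetric] using y_eq by simp
qed

lemma sq_le_one_minus_sq_if_le_all_pos:
  fixes D \<beta> :: real
  assumes le: "\<And>t. 0 < t \<Longrightarrow> 2 * \<bar>D\<bar> \<le> t * (1 - \<beta>) + (1 + \<beta>) / t"
    and \<beta>: "0 \<le> \<beta>" "\<beta> \<le> 1"
  shows "D\<^sup>2 \<le> 1 - \<beta>\<^sup>2"
proof (cases "D = 0")
  case True
  then show ?thesis using \<beta> by (simp add: power_le_one)
next
  case False
  have "\<beta> < 1"
  proof (rule ccontr)
    assume "\<not> \<beta> < 1"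
    then have "2 * \<bar>D\<bar> \<le> 2 / (2 / \<bar>D\<bar>)" using le[of "2 / \<bar>D\<bar>"] \<beta> False by simp
    then show False using False by simp
  qed
  have "2 * \<bar>D\<bar> \<le> \<bar>D\<bar> / (1 - \<beta>) * (1 - \<beta>) + (1 + \<beta>) / (\<bar>D\<bar> / (1 - \<beta>))"
    using le[of "\<bar>D\<bar> / (1 - \<beta>)"] False \<open>\<beta> < 1\<close> by simp
  also have "\<dots> = \<bar>D\<bar> + (1 - \<beta>\<^sup>2) / \<bar>D\<bar>"
    using False \<open>\<beta> < 1\<close> by (simp add: field_simps power2_eq_square)
  finally show ?thesis using False by (simp add: field_simps power2_eq_square)
qed

locale prob_density = prob_space M for M :: "'a measure" +
  fixes f :: "'a \<Rightarrow> real"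
  assumes density_measurable[measurable]: "f \<in> borel_measurable M"
    and density_nonneg: "\<And>x. 0 \<le> f x"
    and prob_space_density: "prob_space (density M f)"
begin

lemma density_integrable: "integrable M f"
proof -
  interpret D: prob_space "density M f" by (rule prob_space_density)
  show ?thesis using integrable_density[of "\<lambda>_. 1::real" M f] density_nonneg by simp
qed

lemma density_integral_eq_1: "(\<integral>x. f x \<partial>M) = 1"
proof -
  interpret D: prob_space "density M f" by (rule prob_space_density)
  show ?thesis using integral_density[of "\<lambda>_. 1::real" M f] density_nonneg D.prob_space by simp
qed

lemma integrable_sqrt_density: "integrable M (\<lambda>x. sqrt (f x))"
proof (rule Bochner_Integration.integrable_bound)
  show "integrable M (\<lambda>x. 1 + f x)" using density_integrable by simp
  have "sqrt (f x) \<le> 1 + f x" for x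
  proof -
    have "0 \<le> (sqrt (f x) - 1)\<^sup>2" by simp
    then show ?thesis using density_nonneg[of x] by (simp add: power2_diff)
  qed
  then show "AE x in M. norm (sqrt (f x)) \<le> norm (1 + f x)"
    using density_nonneg by (simp add: add_nonneg_nonneg)
qed simp

lemma integral_sqrt_density_minus_one_sq:
  "(\<integral>x. (sqrt (f x) - 1)\<^sup>2 \<partial>M) = 2 - 2 * (\<integral>x. sqrt (f x) \<partial>M)"
proof -
  have "(\<lambda>x. (sqrt (f x) - 1)\<^sup>2) = (\<lambda>x. f x - 2 * sqrt (f x) + 1)"
    using density_nonneg by (simp add: power2_diff algebra_simps)
  then show ?thesis
    using density_integrable integrable_sqrt_density density_integral_eq_1 by (simp add: prob_space)
qed

lemma integral_sqrt_density_le_1: "(\<integral>x. sqrt (f x) \<partial>M) \<le> 1"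
  using integral_nonneg_AE[of "\<lambda>x. (sqrt (f x) - 1)\<^sup>2" M] integral_sqrt_density_minus_one_sq
  by simp

lemma integral_sqrt_density_nonneg: "0 \<le> (\<integral>x. sqrt (f x) \<partial>M)"
  by (simp add: density_nonneg)

lemma hellinger_le_chi2_integral:
  assumes "integrable M (\<lambda>x. (f x - 1)\<^sup>2)"
  shows "2 * (1 - (\<integral>x. sqrt (f x) \<partial>M)) \<le> (\<integral>x. (f x - 1)\<^sup>2 \<partial>M)"
proof -
  have "(sqrt y - 1)\<^sup>2 \<le> (y - 1)\<^sup>2" if "0 \<le> y" for y :: real
  proof -
    have "(y - 1)\<^sup>2 = (sqrt y - 1)\<^sup>2 * (sqrt y + 1)\<^sup>2"
      using that by (simp add: power2_eq_square algebra_simps flip: power_mult_distrib)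
    moreover have "1 \<le> (sqrt y + 1)\<^sup>2" using that by (intro one_le_power) simp
    ultimately show ?thesis by (simp add: mult_le_cancel_left1)
  qed
  then have "(\<integral>x. (sqrt (f x) - 1)\<^sup>2 \<partial>M) \<le> (\<integral>x. (f x - 1)\<^sup>2 \<partial>M)"
    using assms integral_sqrt_density_minus_one_sq density_nonneg
    by (intro integral_mono) (auto simp: power2_diff density_integrable integrable_sqrt_density)
  then show ?thesis using integral_sqrt_density_minus_one_sq by simp
qed

lemma measure_diff_density_sq_le:
  assumes A: "A \<in> sets M"
  shows "(measure M A - measure (density M f) A)\<^sup>2 \<le> 1 - (\<integral>x. sqrt (f x) \<partial>M)\<^sup>2"
proof (rule sq_le_one_minus_sq_if_le_all_pos)
  fix t :: real assume t: "0 < t"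
  define D where "D = measure M A - measure (density M f) A"
  define s where "s x = sgn D * (2 * indicator A x - 1)" for x
  have s: "\<bar>s x\<bar> \<le> 1" for x by (auto simp: s_def abs_mult sgn_if indicator_def)
  have [measurable]: "s \<in> borel_measurable M" unfolding s_def using A by measurable
  have int_s: "integrable M (\<lambda>x. s x * (1 - f x))"
    by (rule Bochner_Integration.integrable_bound[of _ "\<lambda>x. 1 - f x"])
       (auto simp: density_integrable abs_mult s mult_left_le_one_le)
  have int_A: "integrable M (indicator A :: 'a \<Rightarrow> real)"
    using A by (intro integrable_real_indicator) (auto simp: emeasure_eq_measure)
  have int_fA: "integrable M (\<lambda>x. f x * indicator A x)"
    using integrable_real_mult_indicator[OF A density_integrable] .
  have "measure M A = (\<integral>x. indicator A x \<partial>M)"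
    using sets.sets_into_space[OF A] by (simp add: Int_absorb2)
  moreover have "measure (density M f) A = (\<integral>x. f x * indicator A x \<partial>M)"
    using integral_density[of "indicator A :: 'a \<Rightarrow> real" M f] A density_nonneg sets.sets_into_space[OF A]
    by (simp add: Int_absorb2)
  moreover have "(\<lambda>x. s x * (1 - f x))
      = (\<lambda>x. sgn D * (2 * (indicator A x - f x * indicator A x) - (1 - f x)))"
    by (auto simp: fun_eq_iff s_def algebra_simps)
  ultimately have "2 * \<bar>D\<bar> = (\<integral>x. s x * (1 - f x) \<partial>M)"
    using int_A int_fA density_integrable density_integral_eq_1
    by (simp add: D_def prob_space abs_sgn)
  also have "\<dots> \<le> (\<integral>x. (t + 1 / t) / 2 * (1 + f x) + (1 / t - t) * sqrt (f x) \<partial>M)"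
    using mult_one_minus_le_sqrt_bound[OF density_nonneg t s] int_s
    by (intro integral_mono) (auto simp: density_integrable integrable_sqrt_density)
  also have "\<dots> = t * (1 - (\<integral>x. sqrt (f x) \<partial>M)) + (1 + (\<integral>x. sqrt (f x) \<partial>M)) / t"
    using t density_integrable integrable_sqrt_density density_integral_eq_1
    by (simp add: prob_space field_simps)
  finally show "2 * \<bar>D\<bar> \<le> t * (1 - (\<integral>x. sqrt (f x) \<partial>M)) + (1 + (\<integral>x. sqrt (f x) \<partial>M)) / t" .
qed (simp_all add: integral_sqrt_density_nonneg integral_sqrt_density_le_1)

lemma PiM_density_eq:
  assumes I: "finite I"
  shows "PiM I (\<lambda>_. density M f) = density (PiM I (\<lambda>_. M)) (\<lambda>x. \<Prod>i\<in>I. f (x i))"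
proof -
  interpret PD: product_prob_space "\<lambda>_. density M f"
    by (rule product_prob_spaceI) (rule prob_space_density)
  interpret PM: product_prob_space "\<lambda>_. M"
    by (rule product_prob_spaceI) (rule prob_space_axioms)
  show ?thesis
  proof (rule PD.PiM_eqI[symmetric, OF I])
    show "sets (density (PiM I (\<lambda>_. M)) (\<lambda>x. \<Prod>i\<in>I. f (x i))) = sets (PiM I (\<lambda>_. density M f))"
      by (auto intro!: sets_PiM_cong)
    fix A assume "\<And>i. i \<in> I \<Longrightarrow> A i \<in> sets (density M f)"
    then have A: "\<And>i. i \<in> I \<Longrightarrow> A i \<in> sets M" by simp
    have "emeasure (density (PiM I (\<lambda>_. M)) (\<lambda>x. \<Prod>i\<in>I. f (x i))) (Pi\<^sub>E I A)
       = (\<integral>\<^sup>+x. ennreal (\<Prod>i\<in>I. f (x i)) * indicator (Pi\<^sub>E I A) x \<partial>PiM I (\<lambda>_. M))"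
      using A I by (subst emeasure_density) (auto intro!: sets_PiM_I_finite)
    also have "\<dots> = (\<integral>\<^sup>+x. (\<Prod>i\<in>I. ennreal (f (x i)) * indicator (A i) (x i)) \<partial>PiM I (\<lambda>_. M))"
    proof (rule nn_integral_cong)
      fix x assume "x \<in> space (PiM I (\<lambda>_. M))"
      then have "indicator (Pi\<^sub>E I A) x = (\<Prod>i\<in>I. indicator (A i) (x i) :: ennreal)"
        using I by (auto simp: space_PiM indicator_def PiE_def Pi_def prod_zero_iff)
      then show "ennreal (\<Prod>i\<in>I. f (x i)) * indicator (Pi\<^sub>E I A) x
          = (\<Prod>i\<in>I. ennreal (f (x i)) * indicator (A i) (x i))"
        by (simp add: prod.distrib prod_ennreal density_nonneg)
    qed
    also have "\<dots> = (\<Prod>i\<in>I. \<integral>\<^sup>+y. ennreal (f y) * indicator (A i) y \<partial>M)"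
      using A by (intro PM.product_nn_integral_prod I) auto
    also have "\<dots> = (\<Prod>i\<in>I. emeasure (density M f) (A i))"
      using A by (intro prod.cong refl) (simp add: emeasure_density)
    finally show "emeasure (density (PiM I (\<lambda>_. M)) (\<lambda>x. \<Prod>i\<in>I. f (x i))) (Pi\<^sub>E I A)
       = (\<Prod>i\<in>I. emeasure (density M f) (A i))" .
  qed
qed

lemma prob_density_PiM:
  assumes "finite I"
  shows "prob_density (PiM I (\<lambda>_. M)) (\<lambda>x. \<Prod>i\<in>I. f (x i))"
proof (intro prob_density.intro prob_density_axioms.intro)
  show "prob_space (PiM I (\<lambda>_. M))" by (rule prob_space_PiM) (rule prob_space_axioms)
  show "prob_space (density (PiM I (\<lambda>_. M)) (\<lambda>x. \<Prod>i\<in>I. f (x i)))"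
    unfolding PiM_density_eq[OF assms, symmetric] by (rule prob_space_PiM) (rule prob_space_density)
qed (auto simp: density_nonneg prod_nonneg)

lemma integral_sqrt_PiM_density:
  assumes "finite I"
  shows "(\<integral>x. sqrt (\<Prod>i\<in>I. f (x i)) \<partial>PiM I (\<lambda>_. M)) = (\<integral>x. sqrt (f x) \<partial>M) ^ card I"
proof -
  interpret PM: product_prob_space "\<lambda>_. M"
    by (rule product_prob_spaceI) (rule prob_space_axioms)
  show ?thesis
    using PM.product_integral_prod[OF assms, of "\<lambda>_ x. sqrt (f x)"] integrable_sqrt_density
    by (simp add: real_sqrt_prod)
qed

end

subsection \<open>Tests from i.i.d. samples\<close>

lemma prob_density_RN_deriv:
  assumes P: "P \<in> space (prob_algebra M)" and Q: "Q \<in> space (prob_algebra M)"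
    and ac: "absolutely_continuous Q P"
  shows "prob_density Q (\<lambda>x. enn2real (RN_deriv Q P x))"
proof (intro prob_density.intro prob_density_axioms.intro)
  show "prob_space Q" using Q by (simp add: space_prob_algebra)
  show "prob_space (density Q (\<lambda>x. enn2real (RN_deriv Q P x)))"
    using P density_enn2real_RN_deriv[OF P Q ac] by (simp add: space_prob_algebra)
qed simp_all

lemma integrable_chi2_integrand:
  assumes "chi2 P Q < \<top>"
  shows "integrable Q (\<lambda>x. (enn2real (RN_deriv Q P x) - 1)\<^sup>2)"
proof (rule integrableI_nn_integral_finite)
  show "(\<integral>\<^sup>+x. ennreal ((enn2real (RN_deriv Q P x) - 1)\<^sup>2) \<partial>Q) = ennreal (enn2real (chi2 P Q))"
    using assms unfolding chi2_def by (simp add: less_top)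
qed auto

lemma enn2real_chi2_eq_integral:
  shows "enn2real (chi2 P Q) = (\<integral>x. (enn2real (RN_deriv Q P x) - 1)\<^sup>2 \<partial>Q)"
  unfolding chi2_def by (subst integral_eq_nn_integral) auto

lemma one_minus_power_le:
  fixes x :: real
  assumes "0 \<le> x"
  shows "1 - x ^ n \<le> n * (1 - x)"
  using Bernoulli_inequality[of "x - 1" n] assms by (simp add: algebra_simps)

lemma measure_PiM_diff_sq_le_chi2:
  assumes P: "P \<in> space (prob_algebra M)" and Q: "Q \<in> space (prob_algebra M)"
    and ac: "absolutely_continuous Q P" and fin: "chi2 P Q < \<top>"
    and I: "finite I" and A: "A \<in> sets (PiM I (\<lambda>_. M))"
  shows "(measure (PiM I (\<lambda>_. Q)) A - measure (PiM I (\<lambda>_. P)) A)\<^sup>2 \<le> card I * enn2real (chi2 P Q)"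
proof -
  define f where "f x = enn2real (RN_deriv Q P x)" for x
  have P_eq: "P = density Q f"
    unfolding f_def by (rule density_enn2real_RN_deriv[OF P Q ac])
  interpret prob_density Q f
    unfolding f_def by (rule prob_density_RN_deriv[OF P Q ac])
  interpret Qn: prob_density "PiM I (\<lambda>_. Q)" "\<lambda>x. \<Prod>i\<in>I. f (x i)"
    by (rule prob_density_PiM[OF I])
  define \<beta> where "\<beta> = (\<integral>x. sqrt (f x) \<partial>Q)"
  have "A \<in> sets (PiM I (\<lambda>_. Q))"
    using A Q by (simp add: space_prob_algebra cong: sets_PiM_cong)
  then have "(measure (PiM I (\<lambda>_. Q)) A - measure (PiM I (\<lambda>_. P)) A)\<^sup>2 \<le> 1 - (\<beta> ^ card I)\<^sup>2"
    using Qn.measure_diff_density_sq_le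
    by (simp add: P_eq PiM_density_eq[OF I] integral_sqrt_PiM_density[OF I] \<beta>_def)
  also have "(\<beta> ^ card I)\<^sup>2 = \<beta> ^ (2 * card I)"
    by (metis power_mult mult.commute)
  also have "1 - \<beta> ^ (2 * card I) \<le> card I * (2 * (1 - \<beta>))"
    using one_minus_power_le[of \<beta> "2 * card I"] integral_sqrt_density_nonneg
    by (simp add: \<beta>_def algebra_simps)
  also have "\<dots> \<le> card I * (\<integral>x. (f x - 1)\<^sup>2 \<partial>Q)"
    using hellinger_le_chi2_integral integrable_chi2_integrand[OF fin]
    by (intro mult_left_mono) (simp_all add: \<beta>_def f_def)
  also have "(\<integral>x. (f x - 1)\<^sup>2 \<partial>Q) = enn2real (chi2 P Q)"
    unfolding f_def by (rule enn2real_chi2_eq_integral[symmetric])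
  finally show ?thesis .
qed

lemma PiM_distr_eq_distr_PiM:
  assumes L: "prob_space L" and G: "G \<in> L \<rightarrow>\<^sub>M N" and I: "finite I"
  shows "PiM I (\<lambda>_. distr L N G) = distr (PiM I (\<lambda>_. L)) (PiM I (\<lambda>_. N)) (compose I G)"
proof -
  interpret L: prob_space L by (rule L)
  obtain x where "x \<in> space L" using L.not_empty by blast
  \<comment> \<open>\<open>N\<close> need not be a probability space; replace it by a Dirac measure with the same \<sigma>-algebra\<close>
  define N' where "N' = return N (G x)"
  have sets_N': "sets N' = sets N" by (simp add: N'_def)
  have "prob_space N'"
    unfolding N'_def using measurable_space[OF G \<open>x \<in> space L\<close>] by (rule prob_space_return)
  moreover have G': "G \<in> L \<rightarrow>\<^sub>M N'" using G by (simp cong: measurable_cong_sets add: sets_N')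
  ultimately have "distr (PiM I (\<lambda>_. L)) (PiM I (\<lambda>_. N')) (compose I G) = PiM I (\<lambda>_. distr L N' G)"
    by (intro distr_PiM_finite_prob_space' I L)
  moreover have "distr L N' G = distr L N G" by (rule distr_cong) (auto simp: sets_N')
  moreover have "distr (PiM I (\<lambda>_. L)) (PiM I (\<lambda>_. N')) (compose I G)
      = distr (PiM I (\<lambda>_. L)) (PiM I (\<lambda>_. N)) (compose I G)"
    by (rule distr_cong) (auto intro!: sets_PiM_cong simp: sets_N')
  ultimately show ?thesis by simp
qed

lemma measure_PiM_distr_pred:
  assumes L: "L \<in> space (prob_algebra M)" and G[measurable]: "G \<in> M \<rightarrow>\<^sub>M N"
    and psi[measurable]: "psi \<in> PiM I (\<lambda>_. N) \<rightarrow>\<^sub>M count_space UNIV" and I: "finite I"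
  shows "measure (PiM I (\<lambda>_. distr L N G)) {x \<in> space (PiM I (\<lambda>_. distr L N G)). psi x}
    = measure (PiM I (\<lambda>_. L)) {x \<in> space (PiM I (\<lambda>_. M)). psi (compose I G x)}"
proof -
  have sets_L: "sets L = sets M" using L by (simp add: space_prob_algebra)
  have sets_PiM: "sets (PiM I (\<lambda>_. L)) = sets (PiM I (\<lambda>_. M))"
    using sets_L by (intro sets_PiM_cong) auto
  have GL: "G \<in> L \<rightarrow>\<^sub>M N" using G by (simp cong: measurable_cong_sets add: sets_L)
  have comp: "compose I G \<in> PiM I (\<lambda>_. L) \<rightarrow>\<^sub>M PiM I (\<lambda>_. N)"
    using GL unfolding compose_def by measurable
  have "{x \<in> space (PiM I (\<lambda>_. N)). psi x} \<in> sets (PiM I (\<lambda>_. N))" by measurable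
  moreover have "space (PiM I (\<lambda>_. distr L N G)) = space (PiM I (\<lambda>_. N))" by (simp add: space_PiM)
  moreover have "space (PiM I (\<lambda>_. L)) = space (PiM I (\<lambda>_. M))"
    using sets_eq_imp_space_eq[OF sets_PiM] .
  ultimately show ?thesis
    using measurable_space[OF comp] L
    by (simp add: PiM_distr_eq_distr_PiM[OF _ GL I] space_prob_algebra measure_distr[OF comp])
       (auto intro!: arg_cong[where f="measure _"])
qed

lemma total_error_lower_bound:
  assumes P: "P \<in> space (prob_algebra M)" and Q: "Q \<in> space (prob_algebra M)"
    and ac: "absolutely_continuous Q P" and fin: "chi2 P Q < \<top>"
    and G[measurable]: "G \<in> M \<rightarrow>\<^sub>M N"
    and psi[measurable]: "psi \<in> PiM {..<n} (\<lambda>_. N) \<rightarrow>\<^sub>M count_space UNIV"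
  shows "(1 - total_error n (distr P N G) (distr Q N G) psi)\<^sup>2 \<le> n * enn2real (chi2 P Q)"
proof -
  define A where "A = {x \<in> space (PiM {..<n} (\<lambda>_. M)). psi (compose {..<n} G x)}"
  have comp: "compose {..<n} G \<in> PiM {..<n} (\<lambda>_. M) \<rightarrow>\<^sub>M PiM {..<n} (\<lambda>_. N)"
    unfolding compose_def by measurable
  have A: "A \<in> sets (PiM {..<n} (\<lambda>_. M))"
    unfolding A_def using measurable_comp[OF comp psi] by (simp add: comp_def pred_def[symmetric])
  interpret Qn: prob_space "PiM {..<n} (\<lambda>_. Q)"
    using Q by (intro prob_space_PiM) (simp add: space_prob_algebra)
  have sets_Qn: "sets (PiM {..<n} (\<lambda>_. Q)) = sets (PiM {..<n} (\<lambda>_. M))"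
    using Q by (intro sets_PiM_cong) (auto simp: space_prob_algebra)
  have "{x \<in> space (PiM {..<n} (\<lambda>_. M)). \<not> psi (compose {..<n} G x)} = space (PiM {..<n} (\<lambda>_. Q)) - A"
    using sets_eq_imp_space_eq[OF sets_Qn] by (auto simp: A_def)
  then have "total_error n (distr P N G) (distr Q N G) psi
      = 1 - (measure (PiM {..<n} (\<lambda>_. Q)) A - measure (PiM {..<n} (\<lambda>_. P)) A)"
    unfolding total_error_def using A sets_Qn
    by (simp add: measure_PiM_distr_pred[OF P G psi] measure_PiM_distr_pred[OF Q G _ finite_lessThan]
        A_def[symmetric] Qn.prob_compl)
  then show ?thesis
    using measure_PiM_diff_sq_le_chi2[OF P Q ac fin finite_lessThan A] by simp
qed

subsection \<open>Inspection schedules\<close>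

lemma next_insp_bounds:
  assumes "finite T" and "t < H"
  shows "next_insp T H t \<in> T \<union> {H}" and "t < next_insp T H t" and "next_insp T H t \<le> H"
proof -
  let ?S = "{u. u \<in> T \<union> {H} \<and> u > t}"
  have fin: "finite ?S" and H: "H \<in> ?S" using assms by auto
  have "Min ?S \<in> ?S" using fin H by (intro Min_in) auto
  moreover have "Min ?S \<le> H" using fin H by (rule Min_le)
  ultimately show "next_insp T H t \<in> T \<union> {H}" "t < next_insp T H t" "next_insp T H t \<le> H"
    unfolding next_insp_def by auto
qed

lemma down_dist_eq_next_insp_minus:
  assumes "finite T" and "t < H"
  shows "down_dist T H t = next_insp T H t - t"
proof -
  let ?S = "{u. u \<in> T \<union> {H} \<and> u > t}"
  have "{u - t |u. u \<in> T \<union> {H} \<and> u > t} = (\<lambda>u. u - t) ` ?S" by auto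
  moreover have "mono (\<lambda>u::nat. u - t)" by (auto intro: monoI diff_le_mono)
  moreover have "finite ?S" "?S \<noteq> {}" using assms by auto
  ultimately show ?thesis
    unfolding down_dist_def next_insp_def by (metis mono_Min_commute)
qed

lemma max_gap_attained:
  assumes "0 < H"
  obtains t where "t < H" and "down_dist T H t = max_gap T H"
proof -
  have "max_gap T H \<in> down_dist T H ` {0..<H}"
    unfolding max_gap_def using assms by (intro Max_in) auto
  then show ?thesis using that by auto
qed

lemma total_error_prop_law_lower_bound:
  assumes kernels: "\<And>j. t \<le> j \<Longrightarrow> j < t + d \<Longrightarrow> K j \<in> M \<rightarrow>\<^sub>M prob_algebra M"
    and contr: "\<And>j. t \<le> j \<Longrightarrow> j < t + d \<Longrightarrow> eta_chi2 M (K j) \<le> ennreal \<eta>" and "0 \<le> \<eta>"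
    and P0: "P0 \<in> space (prob_algebra M)" and P1: "P1 \<in> space (prob_algebra M)"
    and ac: "absolutely_continuous P1 P0" and chi: "chi2 P0 P1 = ennreal \<Delta>2" and "0 \<le> \<Delta>2"
    and G: "G \<in> M \<rightarrow>\<^sub>M N" and psi: "psi \<in> PiM {..<n} (\<lambda>_. N) \<rightarrow>\<^sub>M count_space UNIV"
    and err: "total_error n (distr (prop_law K P0 t d) N G) (distr (prop_law K P1 t d) N G) psi \<le> \<epsilon>"
    and "\<epsilon> \<le> 1"
  shows "(1 - \<epsilon>)\<^sup>2 \<le> n * (\<eta> ^ d * \<Delta>2)"
proof -
  let ?L0 = "prop_law K P0 t d" and ?L1 = "prop_law K P1 t d"
  have chi_L: "absolutely_continuous ?L1 ?L0" "chi2 ?L0 ?L1 \<le> ennreal (\<eta> ^ d * \<Delta>2)"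
    using chi2_prop_law_le[OF kernels contr \<open>0 \<le> \<eta>\<close> P0 P1 ac] chi \<open>0 \<le> \<eta>\<close> \<open>0 \<le> \<Delta>2\<close>
    by (simp_all add: ennreal_mult')
  have "(1 - \<epsilon>)\<^sup>2 \<le> (1 - total_error n (distr ?L0 N G) (distr ?L1 N G) psi)\<^sup>2"
    using err \<open>\<epsilon> \<le> 1\<close> by (intro power_mono) auto
  also have "\<dots> \<le> n * enn2real (chi2 ?L0 ?L1)"
    using chi_L G psi P0 P1 kernels
    by (intro total_error_lower_bound) (auto intro: prop_law_in_space_prob_algebra le_less_trans)
  also have "\<dots> \<le> n * (\<eta> ^ d * \<Delta>2)"
    using chi_L \<open>0 \<le> \<eta>\<close> \<open>0 \<le> \<Delta>2\<close> by (intro mult_left_mono) (auto simp: enn2real_leI)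
  finally show ?thesis .
qed

theorem proposition7:
  fixes M :: "'z measure" and N :: "nat \<Rightarrow> 'y measure"
    and K :: "nat \<Rightarrow> 'z \<Rightarrow> 'z measure" and g :: "nat \<Rightarrow> 'z \<Rightarrow> 'y"
    and H :: nat and T :: "nat set" and \<eta> \<Delta>2 \<epsilon> :: real
  assumes H_pos: "0 < H"
    and kernels: "\<And>j. j < H \<Longrightarrow> K j \<in> M \<rightarrow>\<^sub>M prob_algebra M"
    and contr: "\<And>j. j < H \<Longrightarrow> eta_chi2 M (K j) \<le> ennreal \<eta>"
    and eta: "0 \<le> \<eta>" "\<eta> < 1"
    and sched: "T \<subseteq> {1..<H}"
    and outputs: "\<And>u. u \<in> T \<union> {H} \<Longrightarrow> g u \<in> M \<rightarrow>\<^sub>M N u"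
    and Delta: "0 < \<Delta>2"
    and eps: "0 < \<epsilon>" "\<epsilon> < 1/2"
  shows "\<exists>ts < H. \<forall>P0 P1 n psi.
           P0 \<in> space (prob_algebra M) \<longrightarrow> P1 \<in> space (prob_algebra M) \<longrightarrow>
           absolutely_continuous P1 P0 \<longrightarrow> chi2 P0 P1 = ennreal \<Delta>2 \<longrightarrow>
           psi \<in> PiM {..<n} (\<lambda>_. N (next_insp T H ts)) \<rightarrow>\<^sub>M count_space UNIV \<longrightarrow>
           total_error n
              (distr (prop_law K P0 ts (next_insp T H ts - ts)) (N (next_insp T H ts)) (g (next_insp T H ts)))
              (distr (prop_law K P1 ts (next_insp T H ts - ts)) (N (next_insp T H ts)) (g (next_insp T H ts)))
              psi \<le> \<epsilon> \<longrightarrow>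
           (1 - \<epsilon>)\<^sup>2 \<le> real n * (\<eta> ^ max_gap T H * \<Delta>2)"
proof -
  obtain ts where ts: "ts < H" "down_dist T H ts = max_gap T H"
    using max_gap_attained[OF H_pos] .
  have "finite T" using sched finite_subset by blast
  define u where "u = next_insp T H ts"
  have u: "u \<in> T \<union> {H}" "u \<le> H" "u - ts = max_gap T H"
    using next_insp_bounds[OF \<open>finite T\<close> ts(1)] down_dist_eq_next_insp_minus[OF \<open>finite T\<close> ts(1)] ts(2)
    by (simp_all add: u_def)
  show ?thesis
  proof (intro exI[of _ ts] conjI ts(1) allI impI, fold u_def)
    fix P0 P1 n psi
    assume hyps: "P0 \<in> space (prob_algebra M)" "P1 \<in> space (prob_algebra M)"
      "absolutely_continuous P1 P0" "chi2 P0 P1 = ennreal \<Delta>2"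
      "psi \<in> PiM {..<n} (\<lambda>_. N u) \<rightarrow>\<^sub>M count_space UNIV"
      "total_error n (distr (prop_law K P0 ts (u - ts)) (N u) (g u))
         (distr (prop_law K P1 ts (u - ts)) (N u) (g u)) psi \<le> \<epsilon>"
    have "(1 - \<epsilon>)\<^sup>2 \<le> real n * (\<eta> ^ (u - ts) * \<Delta>2)"
      by (rule total_error_prop_law_lower_bound[OF _ _ eta(1) hyps(1-4) _ _ hyps(5-6)])
         (use kernels contr outputs[OF u(1)] Delta eps u(2) in auto)
    then show "(1 - \<epsilon>)\<^sup>2 \<le> real n * (\<eta> ^ max_gap T H * \<Delta>2)"
      using u(3) by simp
  qed
qed

end
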